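(* Let $f\in\mathbb C\{\{x\}\}_{\mathbb P}$ with $R=\operatorname{rad}(f)>0$, let $G=\{a\in\mathbb C:|a|<R\}$, and for $a\in G$ let $f_a\in\mathbb C\{\{x-a\}\}_{\mathbb P}$ be the expansion of $f$ around $a$. Then $F=(f_a)_{a\in G}$ is a planar analytic function on $G$. Equivalently: for all $a,b\in G$ with $|b-a|<\operatorname{rad}(f_a)$, the expansion of $f_a$ around $b$ equals $f_b$.
   Context: Let $\mathbb P$ denote the set of finite planar reduced rooted trees (children of each vertex linearly ordered, no vertex with exactly one child), including the empty tree $\mathbf 1$ and the one-vertex tree $|$; $\deg(T)$ is the number of leaves, $L(T)$ the set of leaves. The algebra $\mathbb C\{x\}_{\mathbb P}$ has basis $\{x^T\}$, $x^{\mathbf 1}=1$, $x^|=x$, with $k$-linear operations $\omega_k$ ($k\ge2$), $\omega_k(x^{T_1},\dots,x^{T_k})=x^T$ where $T$ is obtained by attaching the nonempty $T_i$ in order as subtrees of the children of a new root (if exactly one is nonempty, $T$ is that one; if none, $T=\mathbf 1$); $y^T$ denotes the iteration of these operations along $T$ starting from $y$, e.g. $(x-a)^T$. $\mathbb C\{\{x-a\}\}_{\mathbb P}$ is the space of formal series $\sum_T\gamma_T(x-a)^T$, with coefficients $\langle f,(x-a)^T\rangle$. Radius of convergence: $\operatorname{rad}(\sum_T\gamma_T(x-a)^T)=\sup\{\rho\ge0:\sum_T|\gamma_T|\rho^{\deg T}<\infty\}$. Contraction $S|I$ for $I\subseteq L(S)$: the tree obtained from the subtree of $S$ spanned by the root-to-leaf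 paths to leaves in $I$ by suppressing all vertices with exactly one child; planar binomial coefficient $(S/T)=\#\{I\subseteq L(S):S|I=T\}$. If $f\in\mathbb C\{\{x-a\}\}_{\mathbb P}$ and $|b-a|<\operatorname{rad}(f)$, the expansion of $f$ around $b$ is $\sum_T\gamma_T(b)(x-b)^T\in\mathbb C\{\{x-b\}\}_{\mathbb P}$ with $\gamma_T(b)=\sum_{U\in\mathbb P}\langle f,(x-a)^U\rangle(U/T)(b-a)^{\deg U-\deg T}$. A planar analytic function on a region $D\subseteq\mathbb C$ is a family $F=(f_a)_{a\in D}$ with $f_a\in\mathbb C\{\{x-a\}\}_{\mathbb P}$, $\operatorname{rad}(f_a)>0$ for all $a$, such that whenever $a,b\in D$ and $\operatorname{rad}(f_a)>|b-a|$, the expansion of $f_a$ around $b$ equals $f_b$. *)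

theory Defs
  imports "HOL-Analysis.Analysis"
begin

text \<open>Planar rooted trees. Emp is the empty tree; Nd [] is the one-vertex tree;
  Nd ts is a root whose children are the roots of the subtrees ts, in order.\<close>
datatype ptree = Emp | Nd "ptree list"

fun reduced :: "ptree \<Rightarrow> bool" where
  "reduced Emp = True"
| "reduced (Nd ts) = (length ts \<noteq> 1 \<and> (\<forall>t\<in>set ts. t \<noteq> Emp \<and> reduced t))"

definition PT :: "ptree set" where
  "PT = {T. reduced T}"

lemma zip_upt_size: "(i, t) \<in> set (zip [0..<length ts] ts) \<Longrightarrow> size t < Suc (size_list size ts)"
proof -
  assume "(i, t) \<in> set (zip [0..<length ts] ts)"
  then have "t \<in> set ts" by (rule set_zip_rightD)
  then have "size t \<le> size_list size ts" by (rule size_list_estimation') simp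
  then show ?thesis by simp
qed

text \<open>Leaves as root-to-leaf paths of child indices.\<close>
function leaves :: "ptree \<Rightarrow> nat list set" where
  "leaves Emp = {}"
| "leaves (Nd ts) = (if ts = [] then {[]}
     else (\<Union>(i, t)\<in>set (zip [0..<length ts] ts). (Cons i) ` leaves t))"
  by pat_completeness auto
termination
  by (relation "Wellfounded.measure size") (auto dest: zip_upt_size)

definition deg :: "ptree \<Rightarrow> nat" where
  "deg T = card (leaves T)"

text \<open>Contraction S|I: spanned subtree, suppressing vertices with exactly one child
  (empty contraction is the empty tree).\<close>
function contr :: "ptree \<Rightarrow> nat list set \<Rightarrow> ptree" where
  "contr Emp I = Emp"
| "contr (Nd ts) I = (if ts = [] then (if [] \<in> I then Nd [] else Emp)
     else (let cs = filter (\<lambda>c. c \<noteq> Emp)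
                 (map (\<lambda>(i, t). contr t {p. i # p \<in> I}) (zip [0..<length ts] ts))
           in if cs = [] then Emp else if length cs = 1 then hd cs else Nd cs))"
  by pat_completeness auto
termination
  by (relation "Wellfounded.measure (\<lambda>(t, I). size t)") (auto dest: zip_upt_size)

definition pbinom :: "ptree \<Rightarrow> ptree \<Rightarrow> nat" where
  "pbinom S T = card {I. I \<subseteq> leaves S \<and> contr S I = T}"

text \<open>A formal planar series sum_T gamma_T (x-a)^T is represented by its coefficient
  function gamma (only values on PT matter); the centre a is kept externally.\<close>
type_synonym pseries = "ptree \<Rightarrow> complex"

definition prad :: "pseries \<Rightarrow> ereal" where
  "prad g = Sup {ereal \<rho> | \<rho>. \<rho> \<ge> 0 \<and>
      (\<lambda>T. norm (g T) * \<rho> ^ deg T) summable_on PT}"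

text \<open>Expansion of a series centred at a around b, where h = b - a.\<close>
definition pexpand :: "pseries \<Rightarrow> complex \<Rightarrow> pseries" where
  "pexpand g h T = (\<Sum>\<^sub>\<infinity>U\<in>PT. g U * of_nat (pbinom U T) * h ^ (deg U - deg T))"

definition series_eq :: "pseries \<Rightarrow> pseries \<Rightarrow> bool" where
  "series_eq g g' \<longleftrightarrow> (\<forall>T\<in>PT. g T = g' T)"

definition planar_analytic :: "complex set \<Rightarrow> (complex \<Rightarrow> pseries) \<Rightarrow> bool" where
  "planar_analytic D F \<longleftrightarrow> open D \<and> connected D \<and> D \<noteq> {} \<and>
     (\<forall>a\<in>D. prad (F a) > 0) \<and>
     (\<forall>a\<in>D. \<forall>b\<in>D. ereal (cmod (b - a)) < prad (F a) \<longrightarrow>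
        series_eq (pexpand (F a) (b - a)) (F b))"

end

(* Re-expanding a planar series is governed by contraction of trees: a contraction (U|I)|J of
   a contraction is again a contraction U|K, with J and K matched by a bijection of leaves.
   Counting subsets of leaves then gives the planar binomial identities
     sum_T (U/T) s^(deg U - deg T) r^(deg T) = (s + r)^(deg U),
     sum_V (U/V) (V/T) a^(deg U - deg V) h^(deg V - deg T) = (U/T) (a + h)^(deg U - deg T).
   The first shows rad f_a >= rad f - |a|; the second, by absolute convergence of the double
   series, shows that f_a expanded around a + h is f_(a+h) whenever |a| + |h| < rad f.
   For arbitrary a, b the two coefficients of (x - b)^T are holomorphic in b (each is a
   convergent power series in the shift) on the convex set where both are defined, and they
   agree near a, so they agree everywhere by the identity theorem. *)

theory Submission
  imports Defs "HOL-Analysis.FPS_Convergence" "HOL-Complex_Analysis.Conformal_Mappings"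
begin

section \<open>Contractions of planar trees\<close>

definition branch :: "nat \<Rightarrow> nat list set \<Rightarrow> nat list set" where
  "branch i K = {p. i # p \<in> K}"

text \<open>\<open>graft [T1, ..., Tk]\<close> is the tree \<open>T\<close> with \<open>\<omega>\<^sub>k(x^T1, ..., x^Tk) = x^T\<close>.\<close>

definition graft :: "ptree list \<Rightarrow> ptree" where
  "graft cs = (let cs' = filter (\<lambda>c. c \<noteq> Emp) cs in
     if cs' = [] then Emp else if length cs' = 1 then hd cs' else Nd cs')"

definition relabel :: "(nat \<Rightarrow> nat) \<Rightarrow> (nat \<Rightarrow> nat list \<Rightarrow> nat list) \<Rightarrow> nat list \<Rightarrow> nat list" where
  "relabel \<kappa> \<Psi> p = \<kappa> (hd p) # \<Psi> (hd p) (tl p)"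

lemma zip_upt_eq_map_nth: "zip [0..<length ts] ts = map (\<lambda>i. (i, ts ! i)) [0..<length ts]"
  by (rule nth_equalityI) auto

lemma leaves_Nd: "ts \<noteq> [] \<Longrightarrow> leaves (Nd ts) = (\<Union>i<length ts. Cons i ` leaves (ts ! i))"
  by (auto simp: leaves.simps zip_upt_eq_map_nth)

lemma leaves_Nd_Nil [simp]: "leaves (Nd []) = {[]}"
  by (simp add: leaves.simps)

lemma contr_Nd_Nil [simp]: "contr (Nd []) I = (if [] \<in> I then Nd [] else Emp)"
  by (simp add: contr.simps)

lemma contr_Nd:
  "ts \<noteq> [] \<Longrightarrow> contr (Nd ts) I = graft (map (\<lambda>i. contr (ts ! i) (branch i I)) [0..<length ts])"
  by (simp add: contr.simps zip_upt_eq_map_nth graft_def branch_def Let_def o_def)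

declare leaves.simps(2) [simp del] contr.simps(2) [simp del]

lemma finite_leaves [simp]: "finite (leaves t)"
proof (induction t)
  case (Nd ts)
  then show ?case
    by (cases "ts = []") (auto simp: leaves_Nd)
qed simp

lemma branch_Cons_image [simp]: "branch i (Cons i ` J) = J"
  by (auto simp: branch_def)

lemma UN_Cons_branch:
  assumes "I \<subseteq> (\<Union>i\<in>A. Cons i ` L i)"
  shows "(\<Union>i\<in>A. Cons i ` branch i I) = I"
proof
  show "I \<subseteq> (\<Union>i\<in>A. Cons i ` branch i I)"
  proof
    fix p assume "p \<in> I"
    with assms obtain i q where "i \<in> A" "p = i # q" by auto
    with \<open>p \<in> I\<close> show "p \<in> (\<Union>i\<in>A. Cons i ` branch i I)" by (auto simp: branch_def)
  qed
qed (auto simp: branch_def)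

lemma graft_Nil [simp]: "graft [] = Emp"
  by (simp add: graft_def)

lemma graft_singleton [simp]: "graft [c] = c"
  by (simp add: graft_def)

lemma graft_eq_Nd:
  assumes "length cs \<noteq> 1" "cs \<noteq> []" "Emp \<notin> set cs"
  shows "graft cs = Nd cs"
proof -
  have "filter (\<lambda>c. c \<noteq> Emp) cs = cs" using assms(3) by (auto simp: filter_id_conv)
  with assms show ?thesis by (simp add: graft_def)
qed

lemma graft_map_filter:
  assumes "\<And>i. i \<in> set xs \<Longrightarrow> \<not> P i \<Longrightarrow> g i = Emp"
  shows "graft (map g xs) = graft (map g (filter P xs))"
proof -
  have "filter (\<lambda>c. c \<noteq> Emp) (map g xs) = filter (\<lambda>c. c \<noteq> Emp) (map g (filter P xs))"
    using assms by (induction xs) auto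
  then show ?thesis by (simp add: graft_def)
qed

lemma reduced_graft:
  assumes "\<And>c. c \<in> set cs \<Longrightarrow> reduced c"
  shows "reduced (graft cs)"
proof -
  define cs' where "cs' = filter (\<lambda>c. c \<noteq> Emp) cs"
  have "\<forall>c\<in>set cs'. c \<noteq> Emp \<and> reduced c" using assms by (auto simp: cs'_def)
  then show ?thesis
    unfolding graft_def cs'_def[symmetric] Let_def by (cases cs') auto
qed

lemma reduced_contr: "reduced (contr U I)"
proof (induction U arbitrary: I)
  case (Nd ts)
  then show ?case
    by (cases "ts = []") (auto simp: contr_Nd intro!: reduced_graft)
qed simp

lemma relabel_Cons [simp]: "relabel \<kappa> \<Psi> (i # q) = \<kappa> i # \<Psi> i q"
  by (simp add: relabel_def)

lemma bij_betw_relabel: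
  assumes \<kappa>: "inj_on \<kappa> A" and \<Psi>: "\<And>i. i \<in> A \<Longrightarrow> bij_betw (\<Psi> i) (L i) (M i)"
  shows "bij_betw (relabel \<kappa> \<Psi>) (\<Union>i\<in>A. Cons i ` L i) (\<Union>i\<in>A. Cons (\<kappa> i) ` M i)"
proof (rule bij_betw_imageI)
  show "inj_on (relabel \<kappa> \<Psi>) (\<Union>i\<in>A. Cons i ` L i)"
  proof (rule inj_onI, clarsimp)
    fix i j q q' assume "i \<in> A" "j \<in> A" "q \<in> L i" "q' \<in> L j" "\<kappa> i = \<kappa> j" "\<Psi> i q = \<Psi> j q'"
    moreover from this \<kappa> have "i = j" by (auto dest: inj_onD)
    ultimately show "i = j \<and> q = q'" using \<Psi> by (auto simp: bij_betw_def dest: inj_onD)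
  qed
  have "relabel \<kappa> \<Psi> ` Cons i ` L i = Cons (\<kappa> i) ` M i" if "i \<in> A" for i
    using \<Psi>[OF that] by (auto simp: bij_betw_def image_image)
  then show "relabel \<kappa> \<Psi> ` (\<Union>i\<in>A. Cons i ` L i) = (\<Union>i\<in>A. Cons (\<kappa> i) ` M i)"
    by (simp add: image_UN)
qed

lemma branch_relabel_image:
  assumes \<kappa>: "inj_on \<kappa> A" and "j \<in> A" and J: "J \<subseteq> (\<Union>i\<in>A. Cons i ` L i)"
  shows "branch (\<kappa> j) (relabel \<kappa> \<Psi> ` J) = \<Psi> j ` branch j J"
proof
  show "branch (\<kappa> j) (relabel \<kappa> \<Psi> ` J) \<subseteq> \<Psi> j ` branch j J"
  proof
    fix p assume "p \<in> branch (\<kappa> j) (relabel \<kappa> \<Psi> ` J)"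
    then obtain q where "q \<in> J" "\<kappa> j # p = relabel \<kappa> \<Psi> q" by (auto simp: branch_def)
    moreover from this J obtain i q' where "i \<in> A" "q = i # q'" by auto
    ultimately show "p \<in> \<Psi> j ` branch j J"
      using \<kappa> \<open>j \<in> A\<close> by (auto simp: branch_def dest: inj_onD)
  qed
  show "\<Psi> j ` branch j J \<subseteq> branch (\<kappa> j) (relabel \<kappa> \<Psi> ` J)"
  proof
    fix p assume "p \<in> \<Psi> j ` branch j J"
    then obtain q where "j # q \<in> J" "p = \<Psi> j q" by (auto simp: branch_def)
    then show "p \<in> branch (\<kappa> j) (relabel \<kappa> \<Psi> ` J)"
      using image_eqI[of "\<kappa> j # p" "relabel \<kappa> \<Psi>" "j # q" J] by (simp add: branch_def)
  qed
qed

lemma contr_Nd_map: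
  assumes idx: "distinct idx" "idx \<noteq> []"
  defines "\<sigma> \<equiv> relabel ((!) idx) (\<lambda>_. id)"
  shows "bij_betw \<sigma> (leaves (Nd (map c idx))) (\<Union>i\<in>set idx. Cons i ` leaves (c i))"
    and "J \<subseteq> leaves (Nd (map c idx)) \<Longrightarrow>
      contr (Nd (map c idx)) J = graft (map (\<lambda>i. contr (c i) (branch i (\<sigma> ` J))) idx)"
proof -
  define n where "n = length idx"
  have map_idx: "map f idx = map (\<lambda>j. f (idx ! j)) [0..<n]" for f :: "nat \<Rightarrow> ptree"
    by (rule nth_equalityI) (auto simp: n_def)
  have leaves_Nd_map: "leaves (Nd (map c idx)) = (\<Union>j\<in>{..<n}. Cons j ` leaves (c (idx ! j)))"
    using idx by (auto simp: leaves_Nd n_def)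
  have inj: "inj_on ((!) idx) {..<n}"
    using idx by (simp add: inj_on_nth n_def)
  have "bij_betw \<sigma> (leaves (Nd (map c idx))) (\<Union>j\<in>{..<n}. Cons (idx ! j) ` leaves (c (idx ! j)))"
    unfolding leaves_Nd_map \<sigma>_def by (rule bij_betw_relabel[OF inj]) simp
  also have "(\<Union>j\<in>{..<n}. Cons (idx ! j) ` leaves (c (idx ! j))) = (\<Union>i\<in>set idx. Cons i ` leaves (c i))"
  proof -
    have "set idx = (!) idx ` {..<n}" by (auto simp: n_def in_set_conv_nth)
    then show ?thesis by (simp add: image_image)
  qed
  finally show "bij_betw \<sigma> (leaves (Nd (map c idx))) (\<Union>i\<in>set idx. Cons i ` leaves (c i))" .
  assume J: "J \<subseteq> leaves (Nd (map c idx))"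
  have "contr (Nd (map c idx)) J = graft (map (\<lambda>j. contr (c (idx ! j)) (branch j J)) [0..<n])"
    using idx by (auto simp: contr_Nd n_def intro!: arg_cong[where f = graft])
  also have "\<dots> = graft (map (\<lambda>j. contr (c (idx ! j)) (branch (idx ! j) (\<sigma> ` J))) [0..<n])"
    using branch_relabel_image[OF inj, where \<Psi> = "\<lambda>_. id"] J
    by (auto simp: \<sigma>_def leaves_Nd_map intro!: arg_cong[where f = graft])
  also have "\<dots> = graft (map (\<lambda>i. contr (c i) (branch i (\<sigma> ` J))) idx)"
    by (simp only: map_idx)
  finally show "contr (Nd (map c idx)) J = graft (map (\<lambda>i. contr (c i) (branch i (\<sigma> ` J))) idx)" .
qed

lemma contr_graft_nonempty:
  assumes idx: "distinct idx" and ne: "\<And>i. i \<in> set idx \<Longrightarrow> c i \<noteq> Emp"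
  obtains \<sigma> where "bij_betw \<sigma> (leaves (graft (map c idx))) (\<Union>i\<in>set idx. Cons i ` leaves (c i))"
    and "\<And>J. J \<subseteq> leaves (graft (map c idx)) \<Longrightarrow>
      contr (graft (map c idx)) J = graft (map (\<lambda>i. contr (c i) (branch i (\<sigma> ` J))) idx)"
proof -
  consider "idx = []" | i where "idx = [i]" | "idx \<noteq> []" "length idx \<noteq> 1"
    by (cases idx rule: remdups_adj.cases) auto
  then show ?thesis
  proof cases
    case 1
    then show ?thesis by (intro that[of id]) (simp_all add: bij_betw_def)
  next
    case (2 i)
    then show ?thesis using ne by (intro that[of "Cons i"]) (auto simp: bij_betw_def)
  next
    case 3
    then have graft_Nd: "graft (map c idx) = Nd (map c idx)"
      using ne by (intro graft_eq_Nd) force+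
    show ?thesis
      using contr_Nd_map[OF idx 3(1), where c = c, folded graft_Nd] by (rule that)
  qed
qed

lemma contr_graft:
  assumes "distinct idx"
  obtains \<sigma> where "bij_betw \<sigma> (leaves (graft (map c idx))) (\<Union>i\<in>set idx. Cons i ` leaves (c i))"
    and "\<And>J. J \<subseteq> leaves (graft (map c idx)) \<Longrightarrow>
      contr (graft (map c idx)) J = graft (map (\<lambda>i. contr (c i) (branch i (\<sigma> ` J))) idx)"
proof -
  define idx' where "idx' = filter (\<lambda>i. c i \<noteq> Emp) idx"
  obtain \<sigma> where bij: "bij_betw \<sigma> (leaves (graft (map c idx'))) (\<Union>i\<in>set idx'. Cons i ` leaves (c i))"
    and transport: "\<And>J. J \<subseteq> leaves (graft (map c idx')) \<Longrightarrow>
      contr (graft (map c idx')) J = graft (map (\<lambda>i. contr (c i) (branch i (\<sigma> ` J))) idx')"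
    by (rule contr_graft_nonempty[of idx' c]) (use assms in \<open>auto simp: idx'_def\<close>)
  have graft_filter: "graft (map (\<lambda>i. contr (c i) (K i)) idx) = graft (map (\<lambda>i. contr (c i) (K i)) idx')"
    for K
    unfolding idx'_def by (rule graft_map_filter) auto
  have "graft (map c idx) = graft (map c idx')"
    unfolding idx'_def by (rule graft_map_filter) auto
  moreover have "(\<Union>i\<in>set idx. Cons i ` leaves (c i)) = (\<Union>i\<in>set idx'. Cons i ` leaves (c i))"
    by (auto simp: idx'_def)
  ultimately show ?thesis
    using bij transport by (intro that[of \<sigma>]) (simp_all only: graft_filter)
qed

definition contr_embedding :: "ptree \<Rightarrow> nat list set \<Rightarrow> (nat list \<Rightarrow> nat list) \<Rightarrow> bool" where
  "contr_embedding U I \<psi> \<longleftrightarrow> bij_betw \<psi> (leaves (contr U I)) I \<and>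
     (\<forall>J \<subseteq> leaves (contr U I). contr (contr U I) J = contr U (\<psi> ` J))"

lemma contr_embedding_Nd:
  assumes ne: "ts \<noteq> []" and I: "I \<subseteq> leaves (Nd ts)"
    and \<Psi>: "\<forall>i\<in>{..<length ts}. contr_embedding (ts ! i) (branch i I) (\<Psi> i)"
  shows "\<exists>\<psi>. contr_embedding (Nd ts) I \<psi>"
proof -
  define n where "n = length ts"
  define c where "c = (\<lambda>i. contr (ts ! i) (branch i I))"
  have I_UN: "I \<subseteq> (\<Union>i\<in>{..<n}. Cons i ` leaves (ts ! i))"
    using I ne by (simp add: leaves_Nd n_def)
  have contr_I: "contr (Nd ts) I = graft (map c [0..<n])"
    using ne by (simp add: contr_Nd c_def n_def)
  obtain \<sigma> where \<sigma>: "bij_betw \<sigma> (leaves (contr (Nd ts) I)) (\<Union>i\<in>{..<n}. Cons i ` leaves (c i))"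
    and \<sigma>_contr: "\<And>J. J \<subseteq> leaves (contr (Nd ts) I) \<Longrightarrow>
      contr (contr (Nd ts) I) J = graft (map (\<lambda>i. contr (c i) (branch i (\<sigma> ` J))) [0..<n])"
    by (rule contr_graft[of "[0..<n]" c, unfolded set_upt atLeast0LessThan, folded contr_I]) (simp, rule that)
  define \<psi> where "\<psi> = relabel id \<Psi> \<circ> \<sigma>"
  have "bij_betw (relabel id \<Psi>) (\<Union>i\<in>{..<n}. Cons i ` leaves (c i)) (\<Union>i\<in>{..<n}. Cons (id i) ` branch i I)"
    using \<Psi> by (intro bij_betw_relabel) (simp_all add: contr_embedding_def c_def n_def)
  with \<sigma> have "bij_betw \<psi> (leaves (contr (Nd ts) I)) I"
    unfolding \<psi>_def UN_Cons_branch[OF I_UN] id_apply by (rule bij_betw_trans)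
  moreover have "contr (contr (Nd ts) I) J = contr (Nd ts) (\<psi> ` J)"
    if J: "J \<subseteq> leaves (contr (Nd ts) I)" for J
  proof -
    have \<sigma>J: "\<sigma> ` J \<subseteq> (\<Union>i\<in>{..<n}. Cons i ` leaves (c i))"
      using image_mono[OF J, of \<sigma>] \<sigma> by (simp add: bij_betw_def)
    have "contr (c i) (branch i (\<sigma> ` J)) = contr (ts ! i) (branch i (\<psi> ` J))" if "i < n" for i
    proof -
      have "branch i (\<psi> ` J) = \<Psi> i ` branch i (\<sigma> ` J)"
        using branch_relabel_image[of id "{..<n}" i "\<sigma> ` J" _ \<Psi>] \<sigma>J that
        by (simp add: \<psi>_def image_comp)
      moreover have "branch i (\<sigma> ` J) \<subseteq> leaves (c i)"
        using \<sigma>J by (auto simp: branch_def)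
      ultimately show ?thesis
        using \<Psi> that by (simp add: contr_embedding_def c_def n_def)
    qed
    then have "graft (map (\<lambda>i. contr (c i) (branch i (\<sigma> ` J))) [0..<n]) =
        graft (map (\<lambda>i. contr (ts ! i) (branch i (\<psi> ` J))) [0..<n])"
      by (intro arg_cong[where f = graft] map_cong) auto
    then show ?thesis
      using \<sigma>_contr[OF J] ne by (simp add: contr_Nd n_def)
  qed
  ultimately have "contr_embedding (Nd ts) I \<psi>"
    unfolding contr_embedding_def by blast
  then show ?thesis by blast
qed

lemma contr_contr: "I \<subseteq> leaves U \<Longrightarrow> \<exists>\<psi>. contr_embedding U I \<psi>"
proof (induction U arbitrary: I)
  case Emp
  then show ?case by (auto simp: contr_embedding_def intro!: exI[of _ id])
next
  case (Nd ts)
  show ?case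
  proof (cases "ts = []")
    case True
    with Nd.prems show ?thesis
      by (auto simp: contr_embedding_def subset_singleton_iff bij_betw_def intro!: exI[of _ id])
  next
    case False
    have "\<forall>i\<in>{..<length ts}. \<exists>\<Psi>. contr_embedding (ts ! i) (branch i I) \<Psi>"
    proof
      fix i assume i: "i \<in> {..<length ts}"
      with Nd.prems False have "branch i I \<subseteq> leaves (ts ! i)"
        by (auto simp: leaves_Nd branch_def)
      with i show "\<exists>\<Psi>. contr_embedding (ts ! i) (branch i I) \<Psi>"
        by (intro Nd.IH) simp_all
    qed
    then have "\<exists>\<Psi>. \<forall>i\<in>{..<length ts}. contr_embedding (ts ! i) (branch i I) (\<Psi> i)"
      by (rule bchoice)
    then obtain \<Psi> where "\<forall>i\<in>{..<length ts}. contr_embedding (ts ! i) (branch i I) (\<Psi> i)"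
      by (rule exE)
    with False Nd.prems show ?thesis
      by (rule contr_embedding_Nd)
  qed
qed

lemma deg_contr: "I \<subseteq> leaves U \<Longrightarrow> deg (contr U I) = card I"
  using contr_contr[of I U] by (auto simp: deg_def contr_embedding_def dest: bij_betw_same_card)

lemma contr_in_PT [simp]: "contr U I \<in> PT"
  by (simp add: PT_def reduced_contr)

lemma pbinom_contr:
  assumes "I \<subseteq> leaves U"
  shows "pbinom (contr U I) T = card {K. K \<subseteq> I \<and> contr U K = T}"
proof -
  obtain \<psi> where \<psi>: "bij_betw \<psi> (leaves (contr U I)) I"
    and \<psi>_contr: "\<And>J. J \<subseteq> leaves (contr U I) \<Longrightarrow> contr (contr U I) J = contr U (\<psi> ` J)"
    using contr_contr[OF assms] unfolding contr_embedding_def by blast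
  have Pow_\<psi>: "bij_betw (image \<psi>) (Pow (leaves (contr U I))) (Pow I)"
    using \<psi> by (rule bij_betw_Pow)
  have image_eq: "image \<psi> ` {J. J \<subseteq> leaves (contr U I) \<and> contr (contr U I) J = T} =
      {K. K \<subseteq> I \<and> contr U K = T}"
  proof
    show "{K. K \<subseteq> I \<and> contr U K = T} \<subseteq> image \<psi> ` {J. J \<subseteq> leaves (contr U I) \<and> contr (contr U I) J = T}"
    proof
      fix K assume K: "K \<in> {K. K \<subseteq> I \<and> contr U K = T}"
      then have "K \<in> image \<psi> ` Pow (leaves (contr U I))"
        using Pow_\<psi> by (auto simp: bij_betw_def)
      then obtain J where "J \<subseteq> leaves (contr U I)" "K = \<psi> ` J"
        by blast
      with K show "K \<in> image \<psi> ` {J. J \<subseteq> leaves (contr U I) \<and> contr (contr U I) J = T}"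
        by (auto simp: \<psi>_contr)
    qed
  qed (use Pow_\<psi> in \<open>auto simp: bij_betw_def \<psi>_contr\<close>)
  have "inj_on (image \<psi>) {J. J \<subseteq> leaves (contr U I) \<and> contr (contr U I) J = T}"
    using Pow_\<psi> by (auto simp: bij_betw_def intro: inj_on_subset)
  from card_image[OF this] show ?thesis
    unfolding pbinom_def image_eq by (rule sym)
qed

section \<open>Planar binomial identities\<close>

definition contractions :: "ptree \<Rightarrow> ptree set" where
  "contractions U = contr U ` Pow (leaves U)"

lemma finite_contractions [simp]: "finite (contractions U)"
  by (simp add: contractions_def)

lemma contractions_subset_PT: "contractions U \<subseteq> PT"
  by (auto simp: contractions_def)

lemma pbinom_eq_card: "pbinom U T = card {I \<in> Pow (leaves U). contr U I = T}"
  unfolding pbinom_def by (rule arg_cong[where f = card]) auto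

lemma pbinom_eq_0: "T \<notin> contractions U \<Longrightarrow> pbinom U T = 0"
  by (auto simp: pbinom_eq_card contractions_def card_eq_0_iff)

lemma sum_pbinom_contractions:
  fixes w :: "ptree \<Rightarrow> 'a::comm_semiring_1"
  shows "(\<Sum>T\<in>contractions U. of_nat (pbinom U T) * w T) = (\<Sum>I\<in>Pow (leaves U). w (contr U I))"
proof -
  have "(\<Sum>I\<in>Pow (leaves U). w (contr U I)) =
      (\<Sum>T\<in>contractions U. \<Sum>I\<in>{I \<in> Pow (leaves U). contr U I = T}. w (contr U I))"
    unfolding contractions_def by (rule sum.image_gen) simp
  also have "\<dots> = (\<Sum>T\<in>contractions U. of_nat (pbinom U T) * w T)"
    by (simp add: pbinom_eq_card)
  finally show ?thesis ..
qed

lemma sum_Pow_binomial: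
  fixes x y :: "'a::comm_semiring_1"
  assumes "finite A"
  shows "(\<Sum>I\<in>Pow A. x ^ (card A - card I) * y ^ card I) = (x + y) ^ card A"
proof -
  have "(x + y) ^ card A = (\<Prod>a\<in>A. y + x)"
    by (simp add: add.commute)
  also have "\<dots> = (\<Sum>I\<in>Pow A. y ^ card I * x ^ card (A - I))"
    using prod_add[OF assms, of "\<lambda>_. y" "\<lambda>_. x"] by simp
  also have "\<dots> = (\<Sum>I\<in>Pow A. x ^ (card A - card I) * y ^ card I)"
    using assms by (intro sum.cong) (auto simp: card_Diff_subset finite_subset mult.commute)
  finally show ?thesis ..
qed

lemma sum_supersets_binomial:
  fixes x y :: "'a::comm_semiring_1"
  assumes "finite A" "K \<subseteq> A"
  shows "(\<Sum>I\<in>{I. K \<subseteq> I \<and> I \<subseteq> A}. x ^ (card A - card I) * y ^ (card I - card K)) =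
    (x + y) ^ (card A - card K)"
proof -
  have finK: "finite K" using assms finite_subset by blast
  have card_A_K: "card (A - K) = card A - card K"
    using assms finK by (simp add: card_Diff_subset)
  have "bij_betw (\<lambda>I. K \<union> I) (Pow (A - K)) {I. K \<subseteq> I \<and> I \<subseteq> A}"
    using assms by (intro bij_betw_byWitness[where f' = "\<lambda>I. I - K"]) auto
  then have "(\<Sum>I\<in>{I. K \<subseteq> I \<and> I \<subseteq> A}. x ^ (card A - card I) * y ^ (card I - card K)) =
      (\<Sum>I\<in>Pow (A - K). x ^ (card A - card (K \<union> I)) * y ^ (card (K \<union> I) - card K))"
    by (rule sum.reindex_bij_betw[symmetric])
  also have "\<dots> = (\<Sum>I\<in>Pow (A - K). x ^ (card (A - K) - card I) * y ^ card I)"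
  proof (intro sum.cong refl)
    fix I assume "I \<in> Pow (A - K)"
    then have "card (K \<union> I) = card K + card I"
      using assms finK by (intro card_Un_disjoint) (auto intro: finite_subset)
    then show "x ^ (card A - card (K \<union> I)) * y ^ (card (K \<union> I) - card K) =
        x ^ (card (A - K) - card I) * y ^ card I"
      by (simp add: card_A_K)
  qed
  also have "\<dots> = (x + y) ^ card (A - K)"
    by (rule sum_Pow_binomial) (use assms in simp)
  finally show ?thesis by (simp only: card_A_K)
qed

lemma sum_pbinom_binomial:
  fixes x y :: "'a::comm_semiring_1"
  shows "(\<Sum>T\<in>contractions U. of_nat (pbinom U T) * (x ^ (deg U - deg T) * y ^ deg T)) = (x + y) ^ deg U"
proof -
  have "(\<Sum>T\<in>contractions U. of_nat (pbinom U T) * (x ^ (deg U - deg T) * y ^ deg T)) =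
      (\<Sum>I\<in>Pow (leaves U). x ^ (deg U - card I) * y ^ card I)"
    unfolding sum_pbinom_contractions by (intro sum.cong) (auto simp: deg_contr)
  also have "\<dots> = (x + y) ^ deg U"
    by (simp add: sum_Pow_binomial deg_def)
  finally show ?thesis .
qed

lemma sum_chains_binomial:
  fixes x y :: "'a::comm_semiring_1"
  assumes "finite L"
  shows "(\<Sum>I\<in>Pow L. \<Sum>K\<in>{K. K \<subseteq> I \<and> P K}. x ^ (card L - card I) * y ^ (card I - card K)) =
    (\<Sum>K\<in>{K \<in> Pow L. P K}. (x + y) ^ (card L - card K))"
proof -
  have "(\<Sum>I\<in>Pow L. \<Sum>K\<in>{K. K \<subseteq> I \<and> P K}. x ^ (card L - card I) * y ^ (card I - card K)) =
      (\<Sum>I\<in>Pow L. \<Sum>K\<in>{K \<in> Pow L. K \<subseteq> I \<and> P K}. x ^ (card L - card I) * y ^ (card I - card K))"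
    by (intro sum.cong) auto
  also have "\<dots> = (\<Sum>K\<in>Pow L. \<Sum>I\<in>{I \<in> Pow L. K \<subseteq> I \<and> P K}. x ^ (card L - card I) * y ^ (card I - card K))"
    by (rule sum.swap_restrict) (simp_all add: assms)
  also have "\<dots> = (\<Sum>K\<in>Pow L. if P K then (x + y) ^ (card L - card K) else 0)"
  proof (intro sum.cong refl)
    fix K assume K: "K \<in> Pow L"
    show "(\<Sum>I\<in>{I \<in> Pow L. K \<subseteq> I \<and> P K}. x ^ (card L - card I) * y ^ (card I - card K)) =
        (if P K then (x + y) ^ (card L - card K) else 0)"
    proof (cases "P K")
      case True
      then have "{I \<in> Pow L. K \<subseteq> I \<and> P K} = {I. K \<subseteq> I \<and> I \<subseteq> L}" by auto
      with True K assms show ?thesis by (simp add: sum_supersets_binomial)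
    qed simp
  qed
  also have "\<dots> = (\<Sum>K\<in>{K \<in> Pow L. P K}. (x + y) ^ (card L - card K))"
    by (rule sum.inter_filter[symmetric]) (simp add: assms)
  finally show ?thesis .
qed

lemma pbinom_contr_mult_power:
  fixes y :: "'a::comm_semiring_1"
  assumes "I \<subseteq> leaves U"
  shows "of_nat (pbinom (contr U I) T) * y ^ (card I - deg T) =
    (\<Sum>K\<in>{K. K \<subseteq> I \<and> contr U K = T}. y ^ (card I - card K))"
proof -
  have "y ^ (card I - card K) = y ^ (card I - deg T)" if "K \<subseteq> I" "contr U K = T" for K
  proof -
    have "K \<subseteq> leaves U" using that(1) assms by (rule order_trans)
    then show ?thesis using deg_contr that(2) by metis
  qed
  then have "(\<Sum>K\<in>{K. K \<subseteq> I \<and> contr U K = T}. y ^ (card I - card K)) =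
      (\<Sum>K\<in>{K. K \<subseteq> I \<and> contr U K = T}. y ^ (card I - deg T))"
    by (intro sum.cong) auto
  then show ?thesis
    using assms by (simp add: pbinom_contr)
qed

text \<open>Both sides count the chains \<open>K \<subseteq> I \<subseteq> leaves U\<close> with \<open>contr U K = T\<close>,
  weighted by \<open>x^|leaves U - I| * y^|I - K|\<close>.\<close>

lemma sum_pbinom_pbinom:
  fixes x y :: "'a::comm_semiring_1"
  shows "(\<Sum>V\<in>contractions U. of_nat (pbinom U V) *
      (of_nat (pbinom V T) * x ^ (deg U - deg V) * y ^ (deg V - deg T))) =
    of_nat (pbinom U T) * (x + y) ^ (deg U - deg T)"
proof -
  define L where "L = leaves U"
  have deg_U: "deg U = card L"
    by (simp add: deg_def L_def)
  have "(\<Sum>V\<in>contractions U. of_nat (pbinom U V) *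
      (of_nat (pbinom V T) * x ^ (deg U - deg V) * y ^ (deg V - deg T))) =
      (\<Sum>I\<in>Pow L. x ^ (card L - card I) * (of_nat (pbinom (contr U I) T) * y ^ (card I - deg T)))"
    unfolding sum_pbinom_contractions L_def[symmetric]
    by (intro sum.cong) (auto simp: L_def deg_contr deg_U mult_ac)
  also have "\<dots> = (\<Sum>I\<in>Pow L. \<Sum>K\<in>{K. K \<subseteq> I \<and> contr U K = T}.
      x ^ (card L - card I) * y ^ (card I - card K))"
    by (intro sum.cong) (auto simp: L_def pbinom_contr_mult_power sum_distrib_left)
  also have "\<dots> = (\<Sum>K\<in>{K \<in> Pow L. contr U K = T}. (x + y) ^ (card L - card K))"
    by (rule sum_chains_binomial) (simp add: L_def)
  also have "\<dots> = (\<Sum>K\<in>{K \<in> Pow L. contr U K = T}. (x + y) ^ (deg U - deg T))"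
    by (intro sum.cong) (auto simp: L_def deg_contr deg_U)
  also have "\<dots> = of_nat (pbinom U T) * (x + y) ^ (deg U - deg T)"
    by (simp add: pbinom_eq_card L_def)
  finally show ?thesis .
qed

section \<open>Convergence of expansions\<close>

lemma has_sum_pbinom:
  fixes w :: "ptree \<Rightarrow> 'a::{topological_comm_monoid_add, t2_space, comm_semiring_1}"
  shows "((\<lambda>T. of_nat (pbinom U T) * w T) has_sum (\<Sum>T\<in>contractions U. of_nat (pbinom U T) * w T)) PT"
  by (rule has_sum_finite_neutralI) (use contractions_subset_PT pbinom_eq_0 in auto)

lemma ereal_le_prad:
  "0 \<le> \<rho> \<Longrightarrow> (\<lambda>T. norm (g T) * \<rho> ^ deg T) summable_on PT \<Longrightarrow> ereal \<rho> \<le> prad g"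
  unfolding prad_def by (rule Sup_upper) auto

lemma summable_on_less_prad:
  assumes "0 \<le> \<rho>" "ereal \<rho> < prad g"
  shows "(\<lambda>T. norm (g T) * \<rho> ^ deg T) summable_on PT"
proof -
  obtain \<rho>' where "\<rho> < \<rho>'" and summable: "(\<lambda>T. norm (g T) * \<rho>' ^ deg T) summable_on PT"
    using assms(2) unfolding prad_def less_Sup_iff by auto
  then show ?thesis
    using assms by (intro summable_on_comparison_test[OF summable]) (auto intro!: mult_left_mono power_mono)
qed

lemma summable_on_expansion_norms:
  fixes s r :: real
  assumes "0 \<le> s" "0 \<le> r" "ereal (s + r) < prad g"
  shows "(\<lambda>(T, U). norm (g U) * (of_nat (pbinom U T) * (s ^ (deg U - deg T) * r ^ deg T)))
    summable_on PT \<times> PT"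
proof -
  define D where "D U T = norm (g U) * (of_nat (pbinom U T) * (s ^ (deg U - deg T) * r ^ deg T))" for U T
  have "((\<lambda>T. D U T) has_sum (norm (g U) * (s + r) ^ deg U)) PT" for U
    using has_sum_pbinom[of U "\<lambda>T. s ^ (deg U - deg T) * r ^ deg T"]
    unfolding D_def sum_pbinom_binomial by (rule has_sum_cmult_right)
  moreover have "(\<lambda>U. norm (g U) * (s + r) ^ deg U) summable_on PT"
    using assms by (intro summable_on_less_prad) auto
  ultimately have "(\<lambda>(U, T). D U T) summable_on PT \<times> PT"
    using assms by (intro summable_on_SigmaI[where B = "\<lambda>_. PT"]) (auto simp: D_def)
  then show ?thesis
    by (subst summable_on_swap) (simp add: D_def)
qed

lemma summable_on_pexpand_norms:
  fixes s :: real
  assumes "0 \<le> s" "ereal s < prad g" "T \<in> PT"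
  shows "(\<lambda>U. norm (g U) * of_nat (pbinom U T) * s ^ (deg U - deg T)) summable_on PT"
proof -
  obtain x where "ereal s < ereal x" "ereal x < prad g"
    using ereal_dense2[OF assms(2)] by blast
  define r where "r = x - s"
  have "r > 0" "ereal (s + r) < prad g"
    using \<open>ereal s < ereal x\<close> \<open>ereal x < prad g\<close> by (auto simp: r_def)
  then have "(\<lambda>U. norm (g U) * (of_nat (pbinom U T) * (s ^ (deg U - deg T) * r ^ deg T))) summable_on PT"
    using summable_on_SigmaD1[OF summable_on_expansion_norms[OF assms(1) _ _], of r g T] assms(3)
    by simp
  then have "(\<lambda>U. norm (g U) * (of_nat (pbinom U T) * (s ^ (deg U - deg T) * r ^ deg T)) * (1 / r ^ deg T))
      summable_on PT"
    by (rule summable_on_cmult_left)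
  then show ?thesis
    using \<open>r > 0\<close> by (simp add: mult.assoc)
qed

lemma prad_pexpand_ge:
  fixes r :: real
  assumes "0 \<le> r" "ereal (cmod h + r) < prad g"
  shows "ereal r \<le> prad (pexpand g h)"
proof (rule ereal_le_prad[OF assms(1)])
  define D where "D U T = norm (g U) * (of_nat (pbinom U T) * (cmod h ^ (deg U - deg T) * r ^ deg T))" for U T
  have "ereal (cmod h) < prad g"
    using assms by (meson ereal_less_eq(3) le_add_same_cancel1 order.strict_trans1)
  have "(\<lambda>T. \<Sum>\<^sub>\<infinity>U\<in>PT. D U T) summable_on PT"
    using summable_on_Sigma_banach[where f = "\<lambda>T U. D U T" and B = "\<lambda>_. PT"]
      summable_on_expansion_norms[OF _ assms] by (simp add: D_def)
  then show "(\<lambda>T. norm (pexpand g h T) * r ^ deg T) summable_on PT"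
  proof (rule summable_on_comparison_test)
    fix T assume T: "T \<in> PT"
    have terms: "(\<lambda>U. norm (g U * of_nat (pbinom U T) * h ^ (deg U - deg T))) summable_on PT"
      using summable_on_pexpand_norms[OF _ \<open>ereal (cmod h) < prad g\<close> T]
      by (simp add: norm_mult norm_power)
    have "norm (pexpand g h T) \<le> (\<Sum>\<^sub>\<infinity>U\<in>PT. norm (g U * of_nat (pbinom U T) * h ^ (deg U - deg T)))"
      unfolding pexpand_def using terms by (rule norm_infsum_bound)
    then have "norm (pexpand g h T) * r ^ deg T \<le>
        (\<Sum>\<^sub>\<infinity>U\<in>PT. norm (g U * of_nat (pbinom U T) * h ^ (deg U - deg T))) * r ^ deg T"
      using assms(1) by (intro mult_right_mono) auto
    also have "\<dots> = (\<Sum>\<^sub>\<infinity>U\<in>PT. norm (g U * of_nat (pbinom U T) * h ^ (deg U - deg T)) * r ^ deg T)"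
      by (rule infsum_cmult_left'[symmetric])
    also have "\<dots> = (\<Sum>\<^sub>\<infinity>U\<in>PT. D U T)"
      by (simp add: D_def norm_mult norm_power mult_ac)
    finally show "norm (pexpand g h T) * r ^ deg T \<le> (\<Sum>\<^sub>\<infinity>U\<in>PT. D U T)" .
  qed (use assms(1) in simp)
qed

lemma summable_on_pexpand_pexpand:
  assumes "ereal (cmod a + cmod h) < prad g" "T \<in> PT"
  shows "(\<lambda>(U, V). g U * of_nat (pbinom U V) * a ^ (deg U - deg V) *
      (of_nat (pbinom V T) * h ^ (deg V - deg T))) summable_on PT \<times> PT"
proof -
  define N where "N U V = norm (g U) * (of_nat (pbinom U V) *
      (of_nat (pbinom V T) * cmod a ^ (deg U - deg V) * cmod h ^ (deg V - deg T)))" for U V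
  have "((\<lambda>V. N U V) has_sum (norm (g U) * (of_nat (pbinom U T) * (cmod a + cmod h) ^ (deg U - deg T)))) PT"
    for U
    using has_sum_pbinom[of U "\<lambda>V. of_nat (pbinom V T) * cmod a ^ (deg U - deg V) * cmod h ^ (deg V - deg T)"]
    unfolding sum_pbinom_pbinom N_def by (rule has_sum_cmult_right)
  moreover have "(\<lambda>U. norm (g U) * (of_nat (pbinom U T) * (cmod a + cmod h) ^ (deg U - deg T))) summable_on PT"
    using summable_on_pexpand_norms[OF _ assms] by (simp add: mult.assoc)
  ultimately have "(\<lambda>(U, V). N U V) summable_on PT \<times> PT"
    by (intro summable_on_SigmaI[where B = "\<lambda>_. PT"]) (auto simp: N_def)
  moreover have "(\<lambda>(U, V). N U V) = (\<lambda>(U, V). norm (g U * of_nat (pbinom U V) * a ^ (deg U - deg V) *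
      (of_nat (pbinom V T) * h ^ (deg V - deg T))))"
    by (auto simp: N_def norm_mult norm_power mult_ac)
  ultimately show ?thesis
    by (subst summable_on_iff_abs_summable_on_complex) (simp add: case_prod_unfold)
qed

lemma pexpand_pexpand_add:
  assumes "ereal (cmod a + cmod h) < prad g" "T \<in> PT"
  shows "pexpand (pexpand g a) h T = pexpand g (a + h) T"
proof -
  define E where "E U V = g U * of_nat (pbinom U V) * a ^ (deg U - deg V) *
      (of_nat (pbinom V T) * h ^ (deg V - deg T))" for U V
  have summable: "(\<lambda>(U, V). E U V) summable_on PT \<times> PT"
    using summable_on_pexpand_pexpand[OF assms] by (simp add: E_def)
  have "pexpand (pexpand g a) h T = (\<Sum>\<^sub>\<infinity>V\<in>PT. \<Sum>\<^sub>\<infinity>U\<in>PT. E U V)"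
    unfolding pexpand_def E_def by (rule infsum_cong, subst infsum_cmult_left') (simp add: mult.assoc)
  also have "\<dots> = (\<Sum>\<^sub>\<infinity>U\<in>PT. \<Sum>\<^sub>\<infinity>V\<in>PT. E U V)"
    using infsum_swap_banach[OF summable] by simp
  also have "\<dots> = (\<Sum>\<^sub>\<infinity>U\<in>PT. g U * of_nat (pbinom U T) * (a + h) ^ (deg U - deg T))"
  proof (rule infsum_cong)
    fix U
    have "(\<Sum>\<^sub>\<infinity>V\<in>PT. E U V) = g U * (\<Sum>\<^sub>\<infinity>V\<in>PT. of_nat (pbinom U V) *
        (of_nat (pbinom V T) * a ^ (deg U - deg V) * h ^ (deg V - deg T)))"
      unfolding E_def by (subst infsum_cmult_right'[symmetric]) (simp add: mult_ac)
    also have "\<dots> = g U * (of_nat (pbinom U T) * (a + h) ^ (deg U - deg T))"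
      using infsumI[OF has_sum_pbinom[of U "\<lambda>V. of_nat (pbinom V T) * a ^ (deg U - deg V) * h ^ (deg V - deg T)"]]
      by (simp add: sum_pbinom_pbinom)
    finally show "(\<Sum>\<^sub>\<infinity>V\<in>PT. E U V) = g U * of_nat (pbinom U T) * (a + h) ^ (deg U - deg T)"
      by (simp add: mult_ac)
  qed
  also have "\<dots> = pexpand g (a + h) T"
    by (simp add: pexpand_def)
  finally show ?thesis .
qed

lemma has_sum_infsum_fibres:
  fixes f :: "'a \<Rightarrow> 'b::banach"
  assumes "f summable_on A"
  shows "((\<lambda>k. \<Sum>\<^sub>\<infinity>x\<in>{x \<in> A. \<kappa> x = k}. f x) has_sum (\<Sum>\<^sub>\<infinity>x\<in>A. f x)) UNIV"
proof -
  define B where "B k = {x \<in> A. \<kappa> x = k}" for k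
  have "bij_betw snd (Sigma UNIV B) A"
    by (rule bij_betw_byWitness[where f' = "\<lambda>x. (\<kappa> x, x)"]) (auto simp: B_def)
  then have "((\<lambda>(k, x). f x) has_sum (\<Sum>\<^sub>\<infinity>x\<in>A. f x)) (Sigma UNIV B)"
    using has_sum_reindex_bij_betw[of snd "Sigma UNIV B" A f] has_sum_infsum[OF assms]
    by (simp add: case_prod_unfold)
  moreover have "(f has_sum (\<Sum>\<^sub>\<infinity>x\<in>B k. f x)) (B k)" for k
    by (rule has_sum_infsum, rule summable_on_subset_banach[OF assms]) (auto simp: B_def)
  ultimately show ?thesis
    unfolding B_def[symmetric] by (intro has_sum_SigmaD[where f = "\<lambda>(k, x). f x" and B = B]) auto
qed

lemma pexpand_sums:
  assumes "ereal (cmod h) < prad g" "T \<in> PT"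
  shows "(\<lambda>k. (\<Sum>\<^sub>\<infinity>U\<in>{U \<in> PT. deg U - deg T = k}. g U * of_nat (pbinom U T)) * h ^ k)
    sums pexpand g h T"
proof -
  have "(\<lambda>U. g U * of_nat (pbinom U T) * h ^ (deg U - deg T)) summable_on PT"
    using summable_on_pexpand_norms[OF _ assms]
    by (simp add: summable_on_iff_abs_summable_on_complex norm_mult norm_power)
  then have "((\<lambda>k. \<Sum>\<^sub>\<infinity>U\<in>{U \<in> PT. deg U - deg T = k}. g U * of_nat (pbinom U T) * h ^ (deg U - deg T))
      has_sum pexpand g h T) UNIV"
    unfolding pexpand_def by (rule has_sum_infsum_fibres)
  moreover have "(\<Sum>\<^sub>\<infinity>U\<in>{U \<in> PT. deg U - deg T = k}. g U * of_nat (pbinom U T) * h ^ (deg U - deg T)) =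
      (\<Sum>\<^sub>\<infinity>U\<in>{U \<in> PT. deg U - deg T = k}. g U * of_nat (pbinom U T)) * h ^ k" for k
    by (subst infsum_cmult_left'[symmetric]) (rule infsum_cong, simp)
  ultimately show ?thesis
    by (simp add: has_sum_imp_sums)
qed

lemma holomorphic_on_pexpand:
  assumes "T \<in> PT"
  shows "(\<lambda>z. pexpand g (z - a) T) holomorphic_on eball a (prad g)"
proof -
  define c where "c k = (\<Sum>\<^sub>\<infinity>U\<in>{U \<in> PT. deg U - deg T = k}. g U * of_nat (pbinom U T))" for k
  have sums: "(\<lambda>k. c k * h ^ k) sums pexpand g h T" if "h \<in> eball 0 (prad g)" for h
    using pexpand_sums[of h g T] that assms by (simp add: c_def)
  have "prad g \<le> fps_conv_radius (Abs_fps c)"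
    unfolding fps_conv_radius_def fps_nth_Abs_fps
  proof (rule conv_radius_geI_ex')
    fix r :: real assume "0 < r" "ereal r < prad g"
    then show "summable (\<lambda>n. c n * of_real r ^ n)"
      using sums[of "of_real r"] by (simp add: sums_summable)
  qed
  then have "eval_fps (Abs_fps c) holomorphic_on eball 0 (prad g)"
    by (intro holomorphic_on_eval_fps eball_mono)
  then have "(\<lambda>h. pexpand g h T) holomorphic_on eball 0 (prad g)"
    by (rule holomorphic_transform) (use sums in \<open>simp add: eval_fps_def sums_iff\<close>)
  then have "(\<lambda>h. pexpand g h T) holomorphic_on (\<lambda>z. z - a) ` eball a (prad g)"
    by (rule holomorphic_on_subset) (auto simp: dist_norm norm_minus_commute)
  then have "((\<lambda>h. pexpand g h T) \<circ> (\<lambda>z. z - a)) holomorphic_on eball a (prad g)"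
    by (intro holomorphic_on_compose) (auto intro: holomorphic_intros)
  then show ?thesis
    by (simp add: o_def)
qed

lemma convex_eball: "convex (eball (z :: 'a :: real_normed_vector) r)"
  by (cases r) simp_all

lemma prad_pexpand_pos:
  assumes "ereal (cmod a) < prad g"
  shows "0 < prad (pexpand g a)"
proof -
  obtain x where "cmod a < x" "ereal x < prad g"
    using ereal_dense2[OF assms] by auto
  then have "ereal (x - cmod a) \<le> prad (pexpand g a)"
    by (intro prad_pexpand_ge) auto
  moreover have "0 < ereal (x - cmod a)"
    using \<open>cmod a < x\<close> by simp
  ultimately show ?thesis by order
qed

lemma pexpand_pexpand:
  assumes a: "a \<in> eball 0 (prad g)" and b: "b \<in> eball 0 (prad g)"
    and ab: "b \<in> eball a (prad (pexpand g a))" and T: "T \<in> PT"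
  shows "pexpand (pexpand g a) (b - a) T = pexpand g b T"
proof -
  define S where "S = eball 0 (prad g) \<inter> eball a (prad (pexpand g a))"
  obtain x where x: "cmod a < x" "ereal x < prad g"
    using a ereal_dense2[of "ereal (cmod a)" "prad g"] by auto
  define \<delta> where "\<delta> = x - cmod a"
  have "ball a \<delta> \<subseteq> ball 0 x"
    by (simp add: ball_subset_ball_iff \<delta>_def dist_norm)
  also have "ball 0 x \<subseteq> eball 0 (prad g)"
    using x(2) by (intro ball_eball_mono) simp
  finally have "ball a \<delta> \<subseteq> eball 0 (prad g)" .
  moreover have "ball a \<delta> \<subseteq> eball a (prad (pexpand g a))"
    using x by (intro ball_eball_mono prad_pexpand_ge) (auto simp: \<delta>_def)
  ultimately have ball_S: "ball a \<delta> \<subseteq> S"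
    by (simp add: S_def)
  have near_eq: "pexpand (pexpand g a) (z - a) T = pexpand g z T" if "z \<in> ball a \<delta>" for z
  proof -
    have "ereal (cmod a + cmod (z - a)) < ereal x"
      using that by (simp add: \<delta>_def dist_norm norm_minus_commute)
    from pexpand_pexpand_add[OF less_trans[OF this x(2)] T] show ?thesis
      by simp
  qed
  have holo_left: "(\<lambda>z. pexpand (pexpand g a) (z - a) T) holomorphic_on S"
    by (rule holomorphic_on_subset[OF holomorphic_on_pexpand[OF T]]) (simp add: S_def)
  have holo_right: "(\<lambda>z. pexpand g z T) holomorphic_on S"
    using holomorphic_on_subset[OF holomorphic_on_pexpand[OF T, of g 0]] by (simp add: S_def)
  have "open S"
    by (simp add: S_def open_Int)
  moreover have "connected S"
    unfolding S_def by (intro convex_connected convex_Int convex_eball)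
  moreover have "b \<in> S"
    using b ab by (simp add: S_def)
  moreover have "ball a \<delta> \<noteq> {}"
    using x by (simp add: \<delta>_def)
  ultimately show ?thesis
    using analytic_continuation_open[OF open_ball _ _ _ ball_S holo_left holo_right near_eq] by simp
qed

theorem proposition3p1:
  fixes f :: pseries
  assumes "prad f > 0"
  shows "planar_analytic {a. ereal (cmod a) < prad f} (\<lambda>a. pexpand f a)"
proof -
  have D: "{a. ereal (cmod a) < prad f} = eball 0 (prad f)"
    by auto
  have "0 \<in> eball 0 (prad f)"
    using assms by (simp add: zero_ereal_def)
  then have "eball 0 (prad f) \<noteq> {}"
    by blast
  moreover have "0 < prad (pexpand f a)" if "a \<in> eball 0 (prad f)" for a
    using that by (intro prad_pexpand_pos) simp
  moreover have "series_eq (pexpand (pexpand f a) (b - a)) (pexpand f b)"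
    if "a \<in> eball 0 (prad f)" "b \<in> eball 0 (prad f)" "ereal (cmod (b - a)) < prad (pexpand f a)" for a b
    unfolding series_eq_def using that
    by (auto intro: pexpand_pexpand simp: dist_norm norm_minus_commute)
  ultimately show ?thesis
    unfolding planar_analytic_def D by (simp add: connected_eball)
qed

end
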